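(* Let $d\ge1$ and $n>2$ be integers. Then $\mathcal U(H(d,n))$ is the groupoid with one object $\ast$ and only the identity morphism $\mathrm{id}_\ast$, and $\varpi(H(d,n))$ is the trivial morphism-colored functor (sending every object to $\ast$, every morphism to $\mathrm{id}_\ast$, every color $a\in\{0,\dots,d\}$ to $\mathrm{id}_\ast$). Consequently, for every category $\mathcal C$, every morphism-colored functor from $H(d,n)$ to the discrete morphism-colored category $(\mathcal C,\mathrm{id})$ factors (uniquely) through this trivial morphism-colored functor; and for all integers $d,d'\ge1$ and $n,n'>2$ there is a one-to-one correspondence between morphism-colored functors $H(d,n)\to(\mathcal C,\mathrm{id})$ and morphism-colored functors $H(d',n')\to(\mathcal C,\mathrm{id})$.
   Context: A morphism-colored category is a pair $(\mathcal C,\lambda)$ where $\mathcal C$ is a category and $\lambda$ assigns to each morphism $f$ a color $\lambda(f)$, such that whenever $\lambda(g)=\lambda(f_1\circ f_2)$ there exist composable $g_1,g_2$ with $g=g_1\circ g_2$, $\lambda(g_i)=\lambda(f_i)$. $(\mathcal C,\mathrm{id})$ (each morphism colored by itself) is the discrete morphism-colored category. A morphism-colored functor $(F,\gamma):(\mathcal C,\lambda)\to(\mathcal C',\lambda')$ is a functor $F$ with a map $\gamma$ on colors such that $\gamma(\lambda(f))=\lambda'(F(f))$ for all morphisms $f$; composition is componentwise. For a small morphism-colored groupoid $(\mathcal G,\lambda)$ with $\lambda(f)=\lambda(g)\Rightarrow\lambda(f^{-1})=\lambda(g^{-1})$: $I_1=\lambda(\mathrm{Mor}\,\mathcal G)$,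 $\lambda_1$ the corestriction; $I_0=\{\lambda(\mathrm{id}_x)\}$, $\lambda_0(x)=\lambda(\mathrm{id}_x)$; $\overset{1}{\sim}$ on $I_1$ relates $\lambda(f_1\circ\cdots\circ f_l)$ and $\lambda(g_1\circ\cdots\circ g_l)$ for composable sequences with $\lambda(f_i)=\lambda(g_i)$ for all $i$ (an equivalence relation), with quotient $s_1:I_1\to\bar I_1$; $\overset{0}{\sim}$ on $I_0$ relates $\lambda_0(\mathrm{source} f)$, $\lambda_0(\mathrm{source} g)$ whenever $s_1\lambda_1(f)=s_1\lambda_1(g)$, with quotient $s_0:I_0\to\bar I_0$. $\mathcal U(\mathcal G,\lambda)$ is the groupoid with objects $\bar I_0$, morphisms $\bar I_1$, source/target of $s_1\lambda_1(f)$ being $s_0\lambda_0$ of source/target of $f$, composition $s_1\lambda_1(f)\circ s_1\lambda_1(g)=s_1\lambda_1(f\circ g)$; $\bar\lambda:\mathcal G\to\mathcal U(\mathcal G,\lambda)$ is $x\mapsto s_0\lambda_0(x)$, $f\mapsto s_1\lambda_1(f)$, and $\varpi(\mathcal G,\lambda)=(\bar\lambda,s_1)$. Hamming schemoid: let $G=(\mathbb Z/n\mathbb Z)^d$ and $w(x)=\#\{i:x_i\neq0\}$ the Hamming weight. $G/\!/G$ is the action groupoid: objects $G$, morphisms $G\times G$, where $(g,x)$ has source $x$ and target $g+x$, composition $(h,g+x)\circ(g,x)=(h+g,x)$, identity $\mathrm{id}_x=(0,x)$, inverse $(g,x)^{-1}=(-g,g+x)$. Let $\pi(g,x)=g$.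 Then $H(d,n)=(G/\!/G,\,w\circ\pi)$, a morphism-colored groupoid with colors in $\{0,\dots,d\}$ satisfying $w\circ\pi(f)=w\circ\pi(g)\Rightarrow w\circ\pi(f^{-1})=w\circ\pi(g^{-1})$. *)

theory Defs
  imports "HOL-Library.FuncSet"
begin

record ('o,'m) category =
  Ob  :: "'o set"
  Ar  :: "'m set"
  src :: "'m \<Rightarrow> 'o"
  tgt :: "'m \<Rightarrow> 'o"
  cmp :: "'m \<Rightarrow> 'm \<Rightarrow> 'm"   (* cmp C g f = g \<circ> f, defined when src g = tgt f *)
  ide :: "'o \<Rightarrow> 'm"

definition is_category :: "('o,'m) category \<Rightarrow> bool" where
  "is_category C \<longleftrightarrow>
     (\<forall>f\<in>Ar C. src C f \<in> Ob C \<and> tgt C f \<in> Ob C) \<and>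
     (\<forall>x\<in>Ob C. ide C x \<in> Ar C \<and> src C (ide C x) = x \<and> tgt C (ide C x) = x) \<and>
     (\<forall>f\<in>Ar C. \<forall>g\<in>Ar C. src C g = tgt C f \<longrightarrow>
        cmp C g f \<in> Ar C \<and> src C (cmp C g f) = src C f \<and> tgt C (cmp C g f) = tgt C g) \<and>
     (\<forall>f\<in>Ar C. \<forall>g\<in>Ar C. \<forall>h\<in>Ar C. src C g = tgt C f \<longrightarrow> src C h = tgt C g \<longrightarrow>
        cmp C h (cmp C g f) = cmp C (cmp C h g) f) \<and>
     (\<forall>f\<in>Ar C. cmp C (ide C (tgt C f)) f = f \<and> cmp C f (ide C (src C f)) = f)"

definition is_functor ::
  "('o1,'m1) category \<Rightarrow> ('o2,'m2) category \<Rightarrow> ('o1 \<Rightarrow> 'o2) \<Rightarrow> ('m1 \<Rightarrow> 'm2) \<Rightarrow> bool" where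
  "is_functor C D Fo Fm \<longleftrightarrow>
     (\<forall>x\<in>Ob C. Fo x \<in> Ob D) \<and> (\<forall>f\<in>Ar C. Fm f \<in> Ar D) \<and>
     (\<forall>f\<in>Ar C. src D (Fm f) = Fo (src C f) \<and> tgt D (Fm f) = Fo (tgt C f)) \<and>
     (\<forall>x\<in>Ob C. Fm (ide C x) = ide D (Fo x)) \<and>
     (\<forall>f\<in>Ar C. \<forall>g\<in>Ar C. src C g = tgt C f \<longrightarrow> Fm (cmp C g f) = cmp D (Fm g) (Fm f))"

text \<open>Morphism-colored functors (F, gamma) from (C, lam) to (D, mu), as (object map, morphism map,
  color map) triples, taken extensional (undefined outside the carriers / color set) so that
  sets of them and uniqueness statements are meaningful.\<close>

definition mc_functors ::
  "('o1,'m1) category \<Rightarrow> ('m1 \<Rightarrow> 'c1) \<Rightarrow> ('o2,'m2) category \<Rightarrow> ('m2 \<Rightarrow> 'c2)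
     \<Rightarrow> (('o1 \<Rightarrow> 'o2) \<times> ('m1 \<Rightarrow> 'm2) \<times> ('c1 \<Rightarrow> 'c2)) set" where
  "mc_functors C lam D mu = {(Fo, Fm, \<gamma>).
     is_functor C D Fo Fm \<and> (\<forall>f\<in>Ar C. \<gamma> (lam f) = mu (Fm f)) \<and>
     Fo \<in> extensional (Ob C) \<and> Fm \<in> extensional (Ar C) \<and> \<gamma> \<in> extensional (lam ` Ar C)}"

fun comp_list :: "('o,'m) category \<Rightarrow> 'm list \<Rightarrow> 'm" where
  "comp_list C [] = undefined"
| "comp_list C [f] = f"
| "comp_list C (f # g # fs) = cmp C f (comp_list C (g # fs))"

definition composable :: "('o,'m) category \<Rightarrow> 'm list \<Rightarrow> bool" where
  "composable C fs \<longleftrightarrow> fs \<noteq> [] \<and> set fs \<subseteq> Ar C \<and>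
     (\<forall>i. Suc i < length fs \<longrightarrow> src C (fs ! i) = tgt C (fs ! Suc i))"

definition I1 :: "('o,'m) category \<Rightarrow> ('m \<Rightarrow> 'c) \<Rightarrow> 'c set" where
  "I1 C lam = lam ` Ar C"

definition lam0 :: "('o,'m) category \<Rightarrow> ('m \<Rightarrow> 'c) \<Rightarrow> 'o \<Rightarrow> 'c" where
  "lam0 C lam x = lam (ide C x)"

definition I0 :: "('o,'m) category \<Rightarrow> ('m \<Rightarrow> 'c) \<Rightarrow> 'c set" where
  "I0 C lam = lam0 C lam ` Ob C"

definition rel1 :: "('o,'m) category \<Rightarrow> ('m \<Rightarrow> 'c) \<Rightarrow> ('c \<times> 'c) set" where
  "rel1 C lam = {(a, b). \<exists>fs gs. composable C fs \<and> composable C gs \<and>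
      map lam fs = map lam gs \<and> a = lam (comp_list C fs) \<and> b = lam (comp_list C gs)}"

definition s1 :: "('o,'m) category \<Rightarrow> ('m \<Rightarrow> 'c) \<Rightarrow> 'c \<Rightarrow> 'c set" where
  "s1 C lam a = rel1 C lam `` {a}"

definition rel0_gen :: "('o,'m) category \<Rightarrow> ('m \<Rightarrow> 'c) \<Rightarrow> ('c \<times> 'c) set" where
  "rel0_gen C lam = {(lam0 C lam (src C f), lam0 C lam (src C g)) | f g.
      f \<in> Ar C \<and> g \<in> Ar C \<and> s1 C lam (lam f) = s1 C lam (lam g)}"

definition rel0 :: "('o,'m) category \<Rightarrow> ('m \<Rightarrow> 'c) \<Rightarrow> ('c \<times> 'c) set" where
  "rel0 C lam = Id_on (I0 C lam) \<union> (rel0_gen C lam \<union> (rel0_gen C lam)\<inverse>)\<^sup>+"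

definition s0 :: "('o,'m) category \<Rightarrow> ('m \<Rightarrow> 'c) \<Rightarrow> 'c \<Rightarrow> 'c set" where
  "s0 C lam c = rel0 C lam `` {c}"

definition lambar_ob :: "('o,'m) category \<Rightarrow> ('m \<Rightarrow> 'c) \<Rightarrow> 'o \<Rightarrow> 'c set" where
  "lambar_ob C lam x = s0 C lam (lam0 C lam x)"

definition lambar_ar :: "('o,'m) category \<Rightarrow> ('m \<Rightarrow> 'c) \<Rightarrow> 'm \<Rightarrow> 'c set" where
  "lambar_ar C lam f = s1 C lam (lam f)"

definition Ucat :: "('o,'m) category \<Rightarrow> ('m \<Rightarrow> 'c) \<Rightarrow> ('c set, 'c set) category" where
  "Ucat C lam = \<lparr>
     Ob = s0 C lam ` I0 C lam,
     Ar = s1 C lam ` I1 C lam,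
     src = (\<lambda>m. lambar_ob C lam (src C (SOME f. f \<in> Ar C \<and> lambar_ar C lam f = m))),
     tgt = (\<lambda>m. lambar_ob C lam (tgt C (SOME f. f \<in> Ar C \<and> lambar_ar C lam f = m))),
     cmp = (\<lambda>m m'. lambar_ar C lam (case (SOME p. fst p \<in> Ar C \<and> snd p \<in> Ar C \<and>
                src C (fst p) = tgt C (snd p) \<and> lambar_ar C lam (fst p) = m \<and>
                lambar_ar C lam (snd p) = m') of (f, g) \<Rightarrow> cmp C f g)),
     ide = (\<lambda>u. lambar_ar C lam (ide C (SOME x. x \<in> Ob C \<and> lambar_ob C lam x = u))) \<rparr>"

text \<open>G = (Z/nZ)^d, elements represented as functions nat => int with values in {0..<n}
  on indices < d and 0 elsewhere.\<close>

definition Gset :: "nat \<Rightarrow> int \<Rightarrow> (nat \<Rightarrow> int) set" where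
  "Gset d n = {x. (\<forall>i<d. 0 \<le> x i \<and> x i < n) \<and> (\<forall>i\<ge>d. x i = 0)}"

definition vadd :: "int \<Rightarrow> (nat \<Rightarrow> int) \<Rightarrow> (nat \<Rightarrow> int) \<Rightarrow> (nat \<Rightarrow> int)" where
  "vadd n g x = (\<lambda>i. (g i + x i) mod n)"

definition hweight :: "nat \<Rightarrow> (nat \<Rightarrow> int) \<Rightarrow> nat" where
  "hweight d x = card {i. i < d \<and> x i \<noteq> 0}"

definition Hcat :: "nat \<Rightarrow> int \<Rightarrow> (nat \<Rightarrow> int, (nat \<Rightarrow> int) \<times> (nat \<Rightarrow> int)) category" where
  "Hcat d n = \<lparr>
     Ob = Gset d n,
     Ar = Gset d n \<times> Gset d n,
     src = (\<lambda>(g, x). x),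
     tgt = (\<lambda>(g, x). vadd n g x),
     cmp = (\<lambda>(h, y) (g, x). (vadd n h g, x)),
     ide = (\<lambda>x. ((\<lambda>i. 0), x)) \<rparr>"

definition Hcol :: "nat \<Rightarrow> (nat \<Rightarrow> int) \<times> (nat \<Rightarrow> int) \<Rightarrow> nat" where
  "Hcol d f = hweight d (fst f)"

end

(*
  For n > 2 every weight a \<le> d is the colour of a composite of two arrows of full weight d:
  translating the vector (-1, ..., -1, 1, ..., 1) with d - a entries -1 by (1, ..., 1) gives
  (0, ..., 0, 2, ..., 2). Hence the relation on colours identifies all colours, and since
  identities have colour 0, all objects are identified as well: U(H(d, n)) is the groupoid with
  one object and one arrow. A morphism-colored functor into a discrete category sends equally
  coloured composable sequences to the same composite, so its colour map is constant; its arrow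
  map is then constantly an identity, and the functor is determined by the image of one object.
  Thus morphism-colored functors H(d, n) \<rightarrow> (C, id) correspond to the objects of C.
*)
theory Submission
  imports Defs
begin

lemma composable_Cons_Cons:
  "composable C (f # g # fs) \<longleftrightarrow> f \<in> Ar C \<and> src C f = tgt C g \<and> composable C (g # fs)"
proof -
  have "(\<forall>i. Suc i < length (f # g # fs) \<longrightarrow> src C ((f # g # fs) ! i) = tgt C ((f # g # fs) ! Suc i))
    \<longleftrightarrow> src C f = tgt C g \<and> (\<forall>i. Suc i < length (g # fs) \<longrightarrow> src C ((g # fs) ! i) = tgt C ((g # fs) ! Suc i))"
    (is "?l \<longleftrightarrow> ?r")
  proof
    assume ?l
    then show ?r by (metis Suc_less_eq length_Cons nth_Cons_0 nth_Cons_Suc zero_less_Suc)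
  next
    assume ?r
    then show ?l by (metis Suc_less_eq length_Cons not0_implies_Suc nth_Cons_0 nth_Cons_Suc)
  qed
  then show ?thesis by (auto simp: composable_def)
qed

lemma comp_list_closed:
  assumes "is_category C" and "composable C fs"
  shows "comp_list C fs \<in> Ar C \<and> tgt C (comp_list C fs) = tgt C (hd fs)"
  using assms(2)
proof (induction fs rule: induct_list012)
  case (3 f g fs)
  then show ?case
    using assms(1) unfolding composable_Cons_Cons is_category_def by auto
qed (auto simp: composable_def)

lemma functor_comp_list:
  assumes "is_category C" and "is_functor C D Fo Fm" and "composable C fs"
  shows "Fm (comp_list C fs) = comp_list D (map Fm fs)"
  using assms(3)
proof (induction fs rule: induct_list012)
  case (3 f g fs)
  then have "comp_list C (g # fs) \<in> Ar C" and "src C f = tgt C (comp_list C (g # fs))"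
    using comp_list_closed[OF assms(1)] by (auto simp: composable_Cons_Cons)
  with 3 show ?case
    using assms(2) unfolding composable_Cons_Cons is_functor_def by auto
qed (auto simp: composable_def)

lemma mc_functor_colour_map_rel1_invariant:
  assumes "is_category C" and "(Fo, Fm, \<gamma>) \<in> mc_functors C lam D id" and "(a, b) \<in> rel1 C lam"
  shows "\<gamma> a = \<gamma> b"
proof -
  have F: "is_functor C D Fo Fm" and col: "\<And>f. f \<in> Ar C \<Longrightarrow> Fm f = \<gamma> (lam f)"
    using assms(2) by (auto simp: mc_functors_def)
  have image: "\<gamma> (lam (comp_list C fs)) = comp_list D (map \<gamma> (map lam fs))"
    if "composable C fs" for fs
  proof -
    have "comp_list C fs \<in> Ar C" and "set fs \<subseteq> Ar C"
      using comp_list_closed[OF assms(1) that] that by (auto simp: composable_def)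
    then have "\<gamma> (lam (comp_list C fs)) = Fm (comp_list C fs)" by (simp add: col)
    also have "\<dots> = comp_list D (map Fm fs)" by (rule functor_comp_list[OF assms(1) F that])
    also have "map Fm fs = map \<gamma> (map lam fs)"
      using \<open>set fs \<subseteq> Ar C\<close> col by auto
    finally show ?thesis .
  qed
  from assms(3) obtain fs gs where "composable C fs" "composable C gs" "map lam fs = map lam gs"
    and "a = lam (comp_list C fs)" "b = lam (comp_list C gs)"
    by (auto simp: rel1_def)
  then show ?thesis using image by metis
qed

definition const_mc_functor ::
  "('o1,'m1) category \<Rightarrow> ('m1 \<Rightarrow> 'c) \<Rightarrow> ('o2,'m2) category \<Rightarrow> 'o2
     \<Rightarrow> ('o1 \<Rightarrow> 'o2) \<times> ('m1 \<Rightarrow> 'm2) \<times> ('c \<Rightarrow> 'm2)" where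
  "const_mc_functor D lam C c =
     (\<lambda>x\<in>Ob D. c, \<lambda>f\<in>Ar D. ide C c, \<lambda>a\<in>lam ` Ar D. ide C c)"

lemma ide_cmp_ide:
  assumes "is_category C" and "c \<in> Ob C"
  shows "cmp C (ide C c) (ide C c) = ide C c"
  using assms unfolding is_category_def by metis

lemma const_mc_functor_in_mc_functors:
  assumes "is_category D" and "is_category C" and "c \<in> Ob C"
  shows "const_mc_functor D lam C c \<in> mc_functors D lam C id"
  using assms ide_cmp_ide[OF assms(2,3)] unfolding is_category_def
  by (auto simp: const_mc_functor_def mc_functors_def is_functor_def)

lemma const_mc_functor_inj:
  assumes "x \<in> Ob D" and "const_mc_functor D lam C c = const_mc_functor D lam C c'"
  shows "c = c'"
proof -
  have "fst (const_mc_functor D lam C c) x = fst (const_mc_functor D lam C c') x"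
    using assms(2) by simp
  with assms(1) show ?thesis by (simp add: const_mc_functor_def)
qed

lemma mc_functor_eq_const_if_arrow_map_constant:
  assumes D: "is_category D" and C: "is_category C"
    and F: "(Fo, Fm, \<gamma>) \<in> mc_functors D lam C id" and x0: "x0 \<in> Ob D"
    and const: "\<And>f. f \<in> Ar D \<Longrightarrow> Fm f = e"
  shows "(Fo, Fm, \<gamma>) = const_mc_functor D lam C (Fo x0)"
proof -
  have funct: "is_functor D C Fo Fm" and col: "\<And>f. f \<in> Ar D \<Longrightarrow> \<gamma> (lam f) = Fm f"
    and ext: "Fo \<in> extensional (Ob D)" "Fm \<in> extensional (Ar D)" "\<gamma> \<in> extensional (lam ` Ar D)"
    using F by (auto simp: mc_functors_def)
  have ide_Fo: "ide C (Fo x) = e" if "x \<in> Ob D" for x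
    using funct const D that unfolding is_functor_def is_category_def by metis
  have e: "e = ide C (Fo x0)" using ide_Fo[OF x0] ..
  have "Fo x = Fo x0" if "x \<in> Ob D" for x
  proof -
    have "Fo x \<in> Ob C" "Fo x0 \<in> Ob C" using funct that x0 by (auto simp: is_functor_def)
    then show ?thesis
      using ide_Fo[OF that] e C unfolding is_category_def by metis
  qed
  then have "Fo = (\<lambda>x\<in>Ob D. Fo x0)"
    using ext(1) by (intro extensionalityI) auto
  moreover have "Fm = (\<lambda>f\<in>Ar D. ide C (Fo x0))"
    using ext(2) const e by (intro extensionalityI) auto
  moreover have "\<gamma> = (\<lambda>a\<in>lam ` Ar D. ide C (Fo x0))"
    using ext(3) const col e by (intro extensionalityI) auto
  ultimately show ?thesis by (simp add: const_mc_functor_def)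
qed

lemma bij_betw_const_mc_functor:
  assumes "is_category D" and "is_category C" and "x \<in> Ob D"
    and "\<And>F. F \<in> mc_functors D lam C id \<Longrightarrow> \<exists>c\<in>Ob C. F = const_mc_functor D lam C c"
  shows "bij_betw (const_mc_functor D lam C) (Ob C) (mc_functors D lam C id)"
proof (rule bij_betwI')
  show "const_mc_functor D lam C c = const_mc_functor D lam C c' \<longleftrightarrow> c = c'" for c c'
  proof
    assume "const_mc_functor D lam C c = const_mc_functor D lam C c'"
    then show "c = c'" by (rule const_mc_functor_inj[OF assms(3)])
  qed simp
  show "const_mc_functor D lam C c \<in> mc_functors D lam C id" if "c \<in> Ob C" for c
    using const_mc_functor_in_mc_functors[OF assms(1,2) that] .
  show "\<exists>c\<in>Ob C. F = const_mc_functor D lam C c" if "F \<in> mc_functors D lam C id" for F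
    using assms(4)[OF that] .
qed

lemma vadd_in_Gset:
  assumes "n > 0" and "g \<in> Gset d n" and "x \<in> Gset d n"
  shows "vadd n g x \<in> Gset d n"
  using assms by (auto simp: vadd_def Gset_def)

lemma vadd_assoc: "vadd n h (vadd n g x) = vadd n (vadd n h g) x"
  by (simp add: vadd_def fun_eq_iff mod_add_right_eq mod_add_left_eq add.assoc)

lemma Gset_mod: "x \<in> Gset d n \<Longrightarrow> x i mod n = x i"
  by (cases "i < d") (auto simp: Gset_def)

lemma vadd_zero_left: "x \<in> Gset d n \<Longrightarrow> vadd n (\<lambda>i. 0) x = x"
  by (simp add: vadd_def Gset_mod)

lemma vadd_zero_right: "x \<in> Gset d n \<Longrightarrow> vadd n x (\<lambda>i. 0) = x"
  by (simp add: vadd_def Gset_mod)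

lemma zero_in_Gset: "n > 0 \<Longrightarrow> (\<lambda>i. 0) \<in> Gset d n"
  by (simp add: Gset_def)

lemma zero_in_Ob_Hcat: "n > 0 \<Longrightarrow> (\<lambda>i. 0) \<in> Ob (Hcat d n)"
  by (simp add: Hcat_def zero_in_Gset)

lemma is_category_Hcat: "n > 0 \<Longrightarrow> is_category (Hcat d n)"
  unfolding is_category_def Hcat_def
  by (auto simp: vadd_in_Gset zero_in_Gset vadd_assoc vadd_zero_left vadd_zero_right)

lemma Hcol_le: "Hcol d f \<le> d"
  unfolding Hcol_def hweight_def by (rule order_trans[OF card_mono[of "{..<d}"]]) auto

definition ones :: "nat \<Rightarrow> nat \<Rightarrow> int" where
  "ones d = (\<lambda>i. if i < d then 1 else 0)"

definition signs :: "nat \<Rightarrow> int \<Rightarrow> nat \<Rightarrow> nat \<Rightarrow> int" where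
  "signs d n k = (\<lambda>i. if i < d then if i < k then n - 1 else 1 else 0)"

lemma hweight_ones: "hweight d (ones d) = d"
proof -
  have "{i. i < d \<and> ones d i \<noteq> 0} = {..<d}" by (auto simp: ones_def)
  then show ?thesis by (simp add: hweight_def)
qed

lemma hweight_signs: "n > 2 \<Longrightarrow> hweight d (signs d n k) = d"
proof -
  assume "n > 2"
  then have "{i. i < d \<and> signs d n k i \<noteq> 0} = {..<d}" by (auto simp: signs_def)
  then show ?thesis by (simp add: hweight_def)
qed

lemma hweight_vadd_ones_signs:
  assumes "n > 2"
  shows "hweight d (vadd n (ones d) (signs d n k)) = d - k"
proof -
  have "vadd n (ones d) (signs d n k) = (\<lambda>i. if k \<le> i \<and> i < d then 2 else 0)"
    using assms by (auto simp: vadd_def ones_def signs_def fun_eq_iff)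
  moreover have "{i. k \<le> i \<and> i < d} = {k..<d}" by auto
  ultimately show ?thesis by (simp add: hweight_def)
qed

lemma ones_in_Gset: "n > 1 \<Longrightarrow> ones d \<in> Gset d n"
  by (simp add: ones_def Gset_def)

lemma signs_in_Gset: "n > 1 \<Longrightarrow> signs d n k \<in> Gset d n"
  by (simp add: signs_def Gset_def)

lemma vadd_signs_zero: "n > 1 \<Longrightarrow> vadd n (signs d n k) (\<lambda>i. 0) = signs d n k"
  by (rule vadd_zero_right[OF signs_in_Gset])

lemma Hcol_composite_of_full_weight:
  assumes "n > 2" and "a \<le> d"
  shows "\<exists>fs. composable (Hcat d n) fs \<and> map (Hcol d) fs = [d, d] \<and>
    Hcol d (comp_list (Hcat d n) fs) = a"
proof -
  let ?f = "(ones d, signs d n (d - a))" and ?g = "(signs d n (d - a), \<lambda>i. 0)"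
  have "composable (Hcat d n) [?f, ?g]"
    using assms by (simp add: composable_def Hcat_def less_Suc_eq ones_in_Gset signs_in_Gset
        zero_in_Gset vadd_signs_zero)
  moreover have "map (Hcol d) [?f, ?g] = [d, d]"
    using assms by (simp add: Hcol_def hweight_ones hweight_signs)
  moreover have "Hcol d (comp_list (Hcat d n) [?f, ?g]) = a"
    using assms by (simp add: Hcol_def Hcat_def hweight_vadd_ones_signs)
  ultimately show ?thesis by (intro exI[of _ "[?f, ?g]"]) simp
qed

lemma rel1_Hamming:
  assumes "n > 2"
  shows "rel1 (Hcat d n) (Hcol d) = {0..d} \<times> {0..d}"
proof
  show "rel1 (Hcat d n) (Hcol d) \<subseteq> {0..d} \<times> {0..d}"
    by (auto simp: rel1_def Hcol_le)
  show "{0..d} \<times> {0..d} \<subseteq> rel1 (Hcat d n) (Hcol d)"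
  proof clarify
    fix a b :: nat
    assume "a \<in> {0..d}" "b \<in> {0..d}"
    then obtain fs gs where "composable (Hcat d n) fs" "map (Hcol d) fs = [d, d]"
        "Hcol d (comp_list (Hcat d n) fs) = a"
      and "composable (Hcat d n) gs" "map (Hcol d) gs = [d, d]"
        "Hcol d (comp_list (Hcat d n) gs) = b"
      using Hcol_composite_of_full_weight[OF assms] by (meson atLeastAtMost_iff)
    then show "(a, b) \<in> rel1 (Hcat d n) (Hcol d)"
      unfolding rel1_def by fastforce
  qed
qed

lemma s1_Hamming: "n > 2 \<Longrightarrow> a \<le> d \<Longrightarrow> s1 (Hcat d n) (Hcol d) a = {0..d}"
  by (auto simp: s1_def rel1_Hamming)

lemma Hcol_image:
  assumes "n > 2"
  shows "Hcol d ` Ar (Hcat d n) = {0..d}"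
proof
  show "Hcol d ` Ar (Hcat d n) \<subseteq> {0..d}" using Hcol_le by auto
  show "{0..d} \<subseteq> Hcol d ` Ar (Hcat d n)"
  proof
    fix a
    assume "a \<in> {0..d}"
    then obtain fs where "composable (Hcat d n) fs" "Hcol d (comp_list (Hcat d n) fs) = a"
      using Hcol_composite_of_full_weight[OF assms] by (meson atLeastAtMost_iff)
    with comp_list_closed[OF is_category_Hcat] assms show "a \<in> Hcol d ` Ar (Hcat d n)"
      by (metis image_eqI zero_less_numeral order.strict_trans)
  qed
qed

lemma lam0_Hamming: "lam0 (Hcat d n) (Hcol d) x = 0"
  by (simp add: lam0_def Hcat_def Hcol_def hweight_def)

lemma I0_Hamming: "n > 0 \<Longrightarrow> I0 (Hcat d n) (Hcol d) = {0}"
  unfolding I0_def lam0_Hamming using zero_in_Gset by (auto simp: Hcat_def)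

lemma rel0_Hamming:
  assumes "n > 0"
  shows "rel0 (Hcat d n) (Hcol d) = {(0, 0)}"
proof -
  let ?R = "rel0_gen (Hcat d n) (Hcol d)"
  have "?R \<union> ?R\<inverse> \<subseteq> {(0, 0)}"
    by (auto simp: rel0_gen_def lam0_Hamming)
  then have "(?R \<union> ?R\<inverse>)\<^sup>+ \<subseteq> {(0, 0)}\<^sup>+"
    by (rule trancl_mono_subset)
  also have "\<dots> = {(0, 0)}"
    by (simp add: trans_def)
  finally have "(?R \<union> ?R\<inverse>)\<^sup>+ \<subseteq> {(0, 0)}" .
  then show ?thesis
    using I0_Hamming[OF assms] by (auto simp: rel0_def)
qed

lemma s0_Hamming: "n > 0 \<Longrightarrow> s0 (Hcat d n) (Hcol d) 0 = {0}"
  by (auto simp: s0_def rel0_Hamming)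

lemma lambar_ob_Hamming: "n > 0 \<Longrightarrow> lambar_ob (Hcat d n) (Hcol d) x = {0}"
  by (simp add: lambar_ob_def lam0_Hamming s0_Hamming)

lemma lambar_ar_Hamming: "n > 2 \<Longrightarrow> lambar_ar (Hcat d n) (Hcol d) f = {0..d}"
  by (simp add: lambar_ar_def s1_Hamming Hcol_le)

lemma Ucat_Hamming:
  assumes "n > 2"
  shows "Ob (Ucat (Hcat d n) (Hcol d)) = {{0}}" and "Ar (Ucat (Hcat d n) (Hcol d)) = {{0..d}}"
    and "src (Ucat (Hcat d n) (Hcol d)) m = {0}" and "tgt (Ucat (Hcat d n) (Hcol d)) m = {0}"
    and "ide (Ucat (Hcat d n) (Hcol d)) u = {0..d}" and "cmp (Ucat (Hcat d n) (Hcol d)) m m' = {0..d}"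
proof -
  have "I1 (Hcat d n) (Hcol d) = {0..d}"
    using Hcol_image[OF assms] by (simp add: I1_def)
  then have "s1 (Hcat d n) (Hcol d) ` I1 (Hcat d n) (Hcol d) = {{0..d}}"
    using s1_Hamming[OF assms] by auto
  then show "Ar (Ucat (Hcat d n) (Hcol d)) = {{0..d}}" by (simp add: Ucat_def)
  show "Ob (Ucat (Hcat d n) (Hcol d)) = {{0}}"
    using assms by (simp add: Ucat_def I0_Hamming s0_Hamming)
qed (use assms in \<open>simp_all add: Ucat_def lambar_ob_Hamming lambar_ar_Hamming\<close>)

lemma is_category_Ucat_Hamming: "n > 2 \<Longrightarrow> is_category (Ucat (Hcat d n) (Hcol d))"
  by (simp add: is_category_def Ucat_Hamming)

lemma Ucat_Hamming_trivial:
  assumes "n > 2"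
  shows "\<exists>u m. Ob (Ucat (Hcat d n) (Hcol d)) = {u} \<and> Ar (Ucat (Hcat d n) (Hcol d)) = {m} \<and>
            src (Ucat (Hcat d n) (Hcol d)) m = u \<and> tgt (Ucat (Hcat d n) (Hcol d)) m = u \<and>
            ide (Ucat (Hcat d n) (Hcol d)) u = m \<and> cmp (Ucat (Hcat d n) (Hcol d)) m m = m \<and>
            (\<forall>x\<in>Ob (Hcat d n). lambar_ob (Hcat d n) (Hcol d) x = u) \<and>
            (\<forall>f\<in>Ar (Hcat d n). lambar_ar (Hcat d n) (Hcol d) f = m) \<and>
            (\<forall>a\<in>{0..d}. s1 (Hcat d n) (Hcol d) a = m)"
  using assms by (intro exI[of _ "{0}"] exI[of _ "{0..d}"])
    (simp add: Ucat_Hamming lambar_ob_Hamming lambar_ar_Hamming s1_Hamming)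

lemma mc_functor_Hamming_eq_const:
  assumes C: "is_category C" and n: "n > 2" and F: "F \<in> mc_functors (Hcat d n) (Hcol d) C id"
  shows "\<exists>c\<in>Ob C. F = const_mc_functor (Hcat d n) (Hcol d) C c"
proof -
  obtain Fo Fm \<gamma> where F_def: "F = (Fo, Fm, \<gamma>)" by (cases F)
  have H: "is_category (Hcat d n)" using n by (simp add: is_category_Hcat)
  have zero: "(\<lambda>i. 0) \<in> Ob (Hcat d n)" using n by (simp add: zero_in_Ob_Hcat)
  have "Fm f = \<gamma> 0" if "f \<in> Ar (Hcat d n)" for f
  proof -
    have "Fm f = \<gamma> (Hcol d f)" using F that by (simp add: F_def mc_functors_def)
    also have "\<dots> = \<gamma> 0"
      using mc_functor_colour_map_rel1_invariant[OF H F[unfolded F_def]]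
      by (simp add: rel1_Hamming[OF n] Hcol_le)
    finally show ?thesis .
  qed
  then have "F = const_mc_functor (Hcat d n) (Hcol d) C (Fo (\<lambda>i. 0))"
    unfolding F_def by (rule mc_functor_eq_const_if_arrow_map_constant[OF H C F[unfolded F_def] zero])
  moreover have "Fo (\<lambda>i. 0) \<in> Ob C"
    using F zero by (auto simp: F_def mc_functors_def is_functor_def)
  ultimately show ?thesis by blast
qed

lemma mc_functor_Hamming_factors_through_Ucat:
  assumes C: "is_category C" and n: "n > 2"
    and F: "(Fo, Fm, \<gamma>) \<in> mc_functors (Hcat d n) (Hcol d) C id"
  shows "\<exists>!K. K \<in> mc_functors (Ucat (Hcat d n) (Hcol d)) id C id \<and>
                (case K of (Ko, Km, \<delta>) \<Rightarrow>
                   (\<forall>x\<in>Ob (Hcat d n). Fo x = Ko (lambar_ob (Hcat d n) (Hcol d) x)) \<and>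
                   (\<forall>f\<in>Ar (Hcat d n). Fm f = Km (lambar_ar (Hcat d n) (Hcol d) f)) \<and>
                   (\<forall>a\<in>Hcol d ` Ar (Hcat d n). \<gamma> a = \<delta> (s1 (Hcat d n) (Hcol d) a)))"
    (is "\<exists>!K. K \<in> mc_functors ?U id C id \<and> ?factors K")
proof -
  obtain c where c: "c \<in> Ob C" and F_const: "(Fo, Fm, \<gamma>) = const_mc_functor (Hcat d n) (Hcol d) C c"
    using mc_functor_Hamming_eq_const[OF C n F] by blast
  have U: "is_category ?U" using n by (rule is_category_Ucat_Hamming)
  have zero: "(\<lambda>i. 0) \<in> Ob (Hcat d n)" using n by (simp add: zero_in_Ob_Hcat)
  show ?thesis
  proof (rule ex1I)
    have "?factors (const_mc_functor ?U id C c)"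
      using F_const n
      by (simp add: const_mc_functor_def Ucat_Hamming lambar_ob_Hamming lambar_ar_Hamming
          Hcol_image s1_Hamming)
    then show "const_mc_functor ?U id C c \<in> mc_functors ?U id C id \<and> ?factors (const_mc_functor ?U id C c)"
      using const_mc_functor_in_mc_functors[OF U C c] by blast
  next
    fix K
    assume K: "K \<in> mc_functors ?U id C id \<and> ?factors K"
    obtain Ko Km \<delta> where K_def: "K = (Ko, Km, \<delta>)" by (cases K)
    have "K = const_mc_functor ?U id C (Ko {0})"
      using K n unfolding K_def
      by (intro mc_functor_eq_const_if_arrow_map_constant[OF U C]) (auto simp: Ucat_Hamming)
    moreover have "Ko {0} = c"
      using K zero F_const n unfolding K_def
      by (auto simp: lambar_ob_Hamming const_mc_functor_def)
    ultimately show "K = const_mc_functor ?U id C c" by simp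
  qed
qed

lemma bij_betw_const_mc_functor_Hamming:
  assumes "is_category C" and "n > 2"
  shows "bij_betw (const_mc_functor (Hcat d n) (Hcol d) C) (Ob C) (mc_functors (Hcat d n) (Hcol d) C id)"
proof (rule bij_betw_const_mc_functor)
  show "is_category (Hcat d n)" using assms(2) by (simp add: is_category_Hcat)
  show "(\<lambda>i. 0) \<in> Ob (Hcat d n)" using assms(2) by (simp add: zero_in_Ob_Hcat)
  show "\<exists>c\<in>Ob C. F = const_mc_functor (Hcat d n) (Hcol d) C c"
    if "F \<in> mc_functors (Hcat d n) (Hcol d) C id" for F
    using mc_functor_Hamming_eq_const[OF assms that] .
qed (rule assms(1))

lemma ex_bij_betw_mc_functors_Hamming:
  assumes "is_category C" and "n > 2" and "n' > 2"
  shows "\<exists>\<phi>. bij_betw \<phi> (mc_functors (Hcat d n) (Hcol d) C id) (mc_functors (Hcat d' n') (Hcol d') C id)"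
  using bij_betw_trans[OF bij_betw_inv_into[OF bij_betw_const_mc_functor_Hamming[OF assms(1,2)]]
      bij_betw_const_mc_functor_Hamming[OF assms(1,3)]]
  by blast

theorem mainTheorem10:
  fixes d d' :: nat and n n' :: int and C :: "('o, 'm) category"
  assumes "d \<ge> 1" and "n > 2"
  shows "(\<exists>u m. Ob (Ucat (Hcat d n) (Hcol d)) = {u} \<and> Ar (Ucat (Hcat d n) (Hcol d)) = {m} \<and>
            src (Ucat (Hcat d n) (Hcol d)) m = u \<and> tgt (Ucat (Hcat d n) (Hcol d)) m = u \<and>
            ide (Ucat (Hcat d n) (Hcol d)) u = m \<and> cmp (Ucat (Hcat d n) (Hcol d)) m m = m \<and>
            (\<forall>x\<in>Ob (Hcat d n). lambar_ob (Hcat d n) (Hcol d) x = u) \<and>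
            (\<forall>f\<in>Ar (Hcat d n). lambar_ar (Hcat d n) (Hcol d) f = m) \<and>
            (\<forall>a\<in>{0..d}. s1 (Hcat d n) (Hcol d) a = m))
       \<and> (is_category C \<longrightarrow>
           (\<forall>(Fo, Fm, \<gamma>) \<in> mc_functors (Hcat d n) (Hcol d) C id.
              \<exists>!K. K \<in> mc_functors (Ucat (Hcat d n) (Hcol d)) id C id \<and>
                (case K of (Ko, Km, \<delta>) \<Rightarrow>
                   (\<forall>x\<in>Ob (Hcat d n). Fo x = Ko (lambar_ob (Hcat d n) (Hcol d) x)) \<and>
                   (\<forall>f\<in>Ar (Hcat d n). Fm f = Km (lambar_ar (Hcat d n) (Hcol d) f)) \<and>
                   (\<forall>a\<in>Hcol d ` Ar (Hcat d n). \<gamma> a = \<delta> (s1 (Hcat d n) (Hcol d) a)))))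
       \<and> (is_category C \<longrightarrow> d' \<ge> 1 \<longrightarrow> n' > 2 \<longrightarrow>
           (\<exists>\<phi>. bij_betw \<phi> (mc_functors (Hcat d n) (Hcol d) C id)
                            (mc_functors (Hcat d' n') (Hcol d') C id)))"
  by (intro conjI impI ballI case_prodI2 Ucat_Hamming_trivial[OF assms(2)]
      ex_bij_betw_mc_functors_Hamming[OF _ assms(2)])
    (simp_all only: mc_functor_Hamming_factors_through_Ucat[OF _ assms(2)])

end
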